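(* Let $f$ be a function on $X$ invariant under the stabilizer $G_b$ of $b=(0,0,1)$ in $G$, whose Lorentzian Fourier-Helgason transforms $\tilde f_{\pm,\nu}(\xi)$ are defined for all $\xi\in C^+$. Then for all $\xi\in C^+$ with $[\xi\cdot b]\ne0$, $$\tilde f_{\pm,\nu}(\xi)=|[\xi\cdot b]|^{-\frac12-i\nu}\Big(Y([\xi\cdot b])\,\tilde F_\pm(\nu)+Y(-[\xi\cdot b])\,\tilde F'_\pm(\nu)\Big),$$ where $\tilde F_\pm(\nu)=\tilde f_{\pm,\nu}((1,0,-1))$ and $\tilde F'_\pm(\nu)=\tilde f_{\pm,\nu}((1,0,1))$.
   Context: $[x\cdot x']=x_0x'_0-x_1x'_1-x_2x'_2$, $x^2=[x\cdot x]$; $X=\{x\in\mathbb R^3:x^2=-1\}$; ${\rm d}\sigma(x)=\frac{{\rm d}x_1{\rm d}x_2}{2|x_0|}$; $G=SO_0(1,2)$; $C^+=\{\xi\in\mathbb R^3\setminus\{0\}:\xi^2=0,\xi_0>0\}$; $Y$ is the Heaviside function. For real $t\neq0$, $t_\pm^s=Y(t)|t|^s+e^{\pm i\pi s}Y(-t)|t|^s$. Lorentzian FH transforms: $\tilde f_{\pm,\nu}(\xi)=\int_X([x\cdot\xi])_\pm^{-\frac12-i\nu}f(x)\,{\rm d}\sigma(x)$, $\xi\in C^+$, $\nu\in\mathbb R$. *)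

theory Defs
  imports "HOL-Analysis.Analysis"
begin

type_synonym pt3 = "real \<times> real \<times> real"

definition lbr :: "pt3 \<Rightarrow> pt3 \<Rightarrow> real" where
  "lbr x y = (case x of (x0, x1, x2) \<Rightarrow> case y of (y0, y1, y2) \<Rightarrow>
      x0 * y0 - x1 * y1 - x2 * y2)"

definition hypX :: "pt3 set" where
  "hypX = {x. lbr x x = -1}"

definition coneC :: "pt3 set" where
  "coneC = {\<xi>. \<xi> \<noteq> 0 \<and> lbr \<xi> \<xi> = 0 \<and> fst \<xi> > 0}"

definition det3 :: "(pt3 \<Rightarrow> pt3) \<Rightarrow> real" where
  "det3 g = (case g (1,0,0) of (a0,a1,a2) \<Rightarrow> case g (0,1,0) of (b0,b1,b2) \<Rightarrow>
     case g (0,0,1) of (c0,c1,c2) \<Rightarrow>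
       a0 * (b1 * c2 - c1 * b2) - b0 * (a1 * c2 - c1 * a2) + c0 * (a1 * b2 - b1 * a2))"

text \<open>G = SO_0(1,2): linear maps preserving the form, det 1, time orientation preserving.\<close>
definition SO012 :: "(pt3 \<Rightarrow> pt3) set" where
  "SO012 = {g. linear g \<and> (\<forall>x y. lbr (g x) (g y) = lbr x y) \<and> det3 g = 1
               \<and> fst (g (1,0,0)) > 0}"

definition bpt :: pt3 where "bpt = (0, 0, 1)"

definition stabG :: "pt3 \<Rightarrow> (pt3 \<Rightarrow> pt3) set" where
  "stabG b = {g \<in> SO012. g b = b}"

text \<open>t_{\<pm>}^s, with sign parameter sg = 1 for +, sg = -1 for -. (Value at t = 0
  is irrelevant: a null set; set to 0.)\<close>
definition powpm :: "real \<Rightarrow> real \<Rightarrow> complex \<Rightarrow> complex" where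
  "powpm sg t s = (if t \<ge> 0 then complex_of_real \<bar>t\<bar> powr s
                   else exp (complex_of_real sg * \<i> * complex_of_real pi * s) * complex_of_real \<bar>t\<bar> powr s)"

definition heav :: "real \<Rightarrow> real" where
  "heav t = (if t > 0 then 1 else 0)"

text \<open>Chart of X: for x1^2+x2^2>1 and e = \<pm>1, the point (e sqrt(x1^2+x2^2-1), x1, x2).
  The two charts cover X up to the null circle x0 = 0, and d\<sigma> = dx1 dx2 / (2|x0|).\<close>
definition chartX :: "real \<Rightarrow> real \<times> real \<Rightarrow> pt3" where
  "chartX e p = (e * sqrt ((fst p)\<^sup>2 + (snd p)\<^sup>2 - 1), fst p, snd p)"

definition chartR :: "(real \<times> real) set" where
  "chartR = {p. (fst p)\<^sup>2 + (snd p)\<^sup>2 > 1}"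

definition FH_integrand :: "real \<Rightarrow> (pt3 \<Rightarrow> complex) \<Rightarrow> real \<Rightarrow> pt3 \<Rightarrow> real \<Rightarrow> real \<times> real \<Rightarrow> complex" where
  "FH_integrand sg f \<nu> \<xi> e p =
     powpm sg (lbr (chartX e p) \<xi>) (- 1/2 - \<i> * complex_of_real \<nu>) * f (chartX e p)
       / complex_of_real (2 * sqrt ((fst p)\<^sup>2 + (snd p)\<^sup>2 - 1))"

definition FH_defined :: "real \<Rightarrow> (pt3 \<Rightarrow> complex) \<Rightarrow> real \<Rightarrow> pt3 \<Rightarrow> bool" where
  "FH_defined sg f \<nu> \<xi> \<longleftrightarrow>
     (\<forall>e\<in>{1, -1}. set_integrable lborel chartR (FH_integrand sg f \<nu> \<xi> e))"

text \<open>Lorentzian Fourier-Helgason transform \<integral>_X ([x.\<xi>])_\<pm>^{-1/2-i\<nu>} f(x) d\<sigma>(x).\<close>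
definition FH :: "real \<Rightarrow> (pt3 \<Rightarrow> complex) \<Rightarrow> real \<Rightarrow> pt3 \<Rightarrow> complex" where
  "FH sg f \<nu> \<xi> = (\<Sum>e\<in>{1, -1::real}. set_lebesgue_integral lborel chartR (FH_integrand sg f \<nu> \<xi> e))"

end

(*
  Parametrise X by t = x2 and the null coordinate a = x0 + x1. On every slice x2 = t with
  t^2 <> 1 the substitution x1 |-> a maps the two charts x0 = +-sqrt (x1^2 + t^2 - 1)
  bijectively onto {x0 > 0} and {x0 < 0}, which together exhaust the a-line up to finitely
  many points, and it turns dsigma into da dt / (2|a|). The boosts in the (x0, x1)-plane lie
  in G_b and act by a |-> l a, which preserves da / |a|; and every \<xi> in C^+ with \<xi>2 <> 0
  is carried by such a boost to |\<xi>2| (1, 0, sgn \<xi>2). So G_b-invariance of f and the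
  homogeneity of t_+-^s give FH(\<xi>) = |\<xi>2|^(-1/2 - i \<nu>) FH(1, 0, sgn \<xi>2), and
  [\<xi>.b] = - \<xi>2 sorts this into the two Heaviside terms.
*)
theory Submission
  imports Defs
begin

lemma set_integrable_lborel_imp_absolutely_integrable:
  fixes g :: "'a::euclidean_space \<Rightarrow> 'b::euclidean_space"
  assumes "set_integrable lborel S g"
  shows "g absolutely_integrable_on S"
proof -
  have "integrable lborel (\<lambda>x. indicator S x *\<^sub>R g x)"
    using assms unfolding set_integrable_def .
  then have "integrable lebesgue (\<lambda>x. indicator S x *\<^sub>R g x)"
    using integrable_completion borel_measurable_integrable by blast
  then show ?thesis unfolding set_integrable_def .
qed

lemma integral_dilation:
  fixes F :: "real \<Rightarrow> 'a::euclidean_space"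
  assumes F: "F absolutely_integrable_on UNIV" and l: "l > 0"
  shows "integral UNIV (\<lambda>a. l *\<^sub>R F (l * a)) = integral UNIV F"
proof -
  have "range (\<lambda>a. l * a) = UNIV"
    using l by (simp add: surj_def)
  moreover have "inj ((*) l)" using l by (simp add: inj_on_def)
  ultimately show ?thesis
    using has_absolute_integral_change_of_variables_real[of UNIV "(*) l" "\<lambda>_. l" F "integral UNIV F"] F l
    by (auto intro!: derivative_eq_intros)
qed

(* The point of X with x0 + x1 = a and x2 = t; then x0 - x1 = (t^2 - 1) / a. *)
definition hyp_pt :: "real \<Rightarrow> real \<Rightarrow> pt3" where
  "hyp_pt t a = ((a + (t\<^sup>2 - 1) / a) / 2, (a - (t\<^sup>2 - 1) / a) / 2, t)"

lemma hyp_pt_in_hypX: "a \<noteq> 0 \<Longrightarrow> hyp_pt t a \<in> hypX"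
  unfolding hypX_def lbr_def hyp_pt_def by (simp add: field_simps power2_eq_square)

definition chart_slice :: "real \<Rightarrow> real set" where
  "chart_slice t = {x. 1 < x\<^sup>2 + t\<^sup>2}"

(* x0 + x1 at the point chartX e (x, t). *)
definition chart_null_coord :: "real \<Rightarrow> real \<Rightarrow> real \<Rightarrow> real" where
  "chart_null_coord t e x = x + e * sqrt (x\<^sup>2 + t\<^sup>2 - 1)"

lemma chart_null_coord_mult:
  assumes e: "e \<in> {1, -1}" and x: "x \<in> chart_slice t"
  shows "chart_null_coord t e x * (e * sqrt (x\<^sup>2 + t\<^sup>2 - 1) - x) = t\<^sup>2 - 1"
proof -
  define s where "s = sqrt (x\<^sup>2 + t\<^sup>2 - 1)"
  have "chart_null_coord t e x * (e * s - x) = (e * e) * s\<^sup>2 - x\<^sup>2"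
    unfolding chart_null_coord_def s_def by (simp add: algebra_simps power2_eq_square)
  also have "\<dots> = t\<^sup>2 - 1"
    using e x unfolding s_def chart_slice_def by auto
  finally show ?thesis unfolding s_def .
qed

lemma hyp_pt_chart_null_coord:
  assumes e: "e \<in> {1, -1}" and x: "x \<in> chart_slice t" and t: "t\<^sup>2 \<noteq> 1"
  shows "chart_null_coord t e x \<noteq> 0"
    and "hyp_pt t (chart_null_coord t e x) = chartX e (x, t)"
proof -
  note mult = chart_null_coord_mult[OF e x]
  show nz: "chart_null_coord t e x \<noteq> 0" using mult t by auto
  have "(t\<^sup>2 - 1) / chart_null_coord t e x = e * sqrt (x\<^sup>2 + t\<^sup>2 - 1) - x"
    using mult nz by (simp add: field_simps)
  then show "hyp_pt t (chart_null_coord t e x) = chartX e (x, t)"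
    unfolding hyp_pt_def chartX_def by (simp add: chart_null_coord_def)
qed

lemma inj_on_chart_null_coord:
  assumes "e \<in> {1, -1}" and "t\<^sup>2 \<noteq> 1"
  shows "inj_on (chart_null_coord t e) (chart_slice t)"
proof (rule inj_on_inverseI)
  fix x assume "x \<in> chart_slice t"
  then show "fst (snd (hyp_pt t (chart_null_coord t e x))) = x"
    using hyp_pt_chart_null_coord(2) assms by (simp add: chartX_def)
qed

lemma sgn_fst_hyp_pt_chart_null_coord:
  assumes e: "e \<in> {1, -1}" and x: "x \<in> chart_slice t" and t: "t\<^sup>2 \<noteq> 1"
  shows "sgn (fst (hyp_pt t (chart_null_coord t e x))) = e"
  using hyp_pt_chart_null_coord(2)[OF assms] x e
  by (auto simp: chartX_def chart_slice_def sgn_mult)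

lemma chart_null_coord_surj:
  assumes a: "a \<noteq> 0" and y: "fst (hyp_pt t a) \<noteq> 0"
  shows "a \<in> chart_null_coord t (sgn (fst (hyp_pt t a))) ` chart_slice t"
proof -
  define y x where "y = fst (hyp_pt t a)" and "x = fst (snd (hyp_pt t a))"
  have y2: "x\<^sup>2 + t\<^sup>2 - 1 = y\<^sup>2"
    using hyp_pt_in_hypX[OF a, of t] unfolding hypX_def lbr_def hyp_pt_def x_def y_def
    by (simp add: power2_eq_square)
  have x: "x \<in> chart_slice t"
  proof -
    have "y\<^sup>2 > 0" using y unfolding y_def by simp
    with y2 have "1 < x\<^sup>2 + t\<^sup>2" by linarith
    then show ?thesis unfolding chart_slice_def by simp
  qed
  have "sqrt (x\<^sup>2 + t\<^sup>2 - 1) = \<bar>y\<bar>" unfolding y2 by simp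
  then have "chart_null_coord t (sgn y) x = x + y"
    unfolding chart_null_coord_def by (simp add: sgn_mult_abs)
  also have "\<dots> = a" unfolding x_def y_def hyp_pt_def by (simp add: field_simps)
  finally have "chart_null_coord t (sgn y) x = a" .
  with x show ?thesis unfolding y_def by (metis image_eqI)
qed

lemma finite_hyp_pt_off_charts: "finite {a. a = 0 \<or> fst (hyp_pt t a) = 0}"
proof (rule finite_subset)
  show "{a. a = 0 \<or> fst (hyp_pt t a) = 0} \<subseteq> {0, sqrt (1 - t\<^sup>2), - sqrt (1 - t\<^sup>2)}"
  proof
    fix a assume "a \<in> {a. a = 0 \<or> fst (hyp_pt t a) = 0}"
    moreover have "\<bar>a\<bar> = sqrt (1 - t\<^sup>2)" if "a \<noteq> 0" "fst (hyp_pt t a) = 0"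
    proof -
      have "a\<^sup>2 = 1 - t\<^sup>2" using that by (simp add: hyp_pt_def field_simps power2_eq_square)
      then show ?thesis by (metis real_sqrt_abs)
    qed
    ultimately show "a \<in> {0, sqrt (1 - t\<^sup>2), - sqrt (1 - t\<^sup>2)}" by (auto simp: abs_if split: if_splits)
  qed
qed simp

lemma chart_null_coord_has_derivative:
  assumes "x \<in> chart_slice t"
  shows "(chart_null_coord t e has_real_derivative 1 + e * x / sqrt (x\<^sup>2 + t\<^sup>2 - 1)) (at x within S)"
  unfolding chart_null_coord_def[abs_def] using assms
  by (auto intro!: derivative_eq_intros simp: chart_slice_def field_simps)

lemma abs_deriv_chart_null_coord:
  assumes e: "e \<in> {1, -1}" and x: "x \<in> chart_slice t"
  shows "\<bar>1 + e * x / sqrt (x\<^sup>2 + t\<^sup>2 - 1)\<bar> = \<bar>chart_null_coord t e x\<bar> / sqrt (x\<^sup>2 + t\<^sup>2 - 1)"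
proof -
  define s where "s = sqrt (x\<^sup>2 + t\<^sup>2 - 1)"
  have s: "s > 0" using x unfolding s_def chart_slice_def by simp
  have "\<bar>1 + e * x / s\<bar> = \<bar>s + e * x\<bar> / s" using s by (simp add: field_simps)
  also have "\<bar>s + e * x\<bar> = \<bar>x + e * s\<bar>" using e by (auto simp: abs_minus_commute)
  finally show ?thesis unfolding s_def chart_null_coord_def .
qed

definition chart_density :: "(pt3 \<Rightarrow> complex) \<Rightarrow> real \<Rightarrow> real \<times> real \<Rightarrow> complex" where
  "chart_density H e p = H (chartX e p) / complex_of_real (2 * sqrt ((fst p)\<^sup>2 + (snd p)\<^sup>2 - 1))"

definition integrable_X :: "(pt3 \<Rightarrow> complex) \<Rightarrow> bool" where
  "integrable_X H \<longleftrightarrow> (\<forall>e\<in>{1, -1}. set_integrable lborel chartR (chart_density H e))"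

definition integral_X :: "(pt3 \<Rightarrow> complex) \<Rightarrow> complex" where
  "integral_X H = (\<Sum>e\<in>{1, -1::real}. LINT p : chartR | lborel. chart_density H e p)"

definition slice_integral :: "(pt3 \<Rightarrow> complex) \<Rightarrow> real \<Rightarrow> complex" where
  "slice_integral H t = (\<Sum>e\<in>{1, -1::real}. LINT x : chart_slice t | lborel. chart_density H e (x, t))"

lemma set_integral_chartR_by_slices:
  fixes \<phi> :: "real \<times> real \<Rightarrow> complex"
  assumes int: "set_integrable lborel chartR \<phi>"
  shows "AE t in lborel. set_integrable lborel (chart_slice t) (\<lambda>x. \<phi> (x, t))"
    and "integrable lborel (\<lambda>t. LINT x : chart_slice t | lborel. \<phi> (x, t))"
    and "(LINT p : chartR | lborel. \<phi> p) = (\<integral>t. (LINT x : chart_slice t | lborel. \<phi> (x, t)) \<partial>lborel)"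
proof -
  let ?g = "\<lambda>x t. indicator (chart_slice t) x *\<^sub>R \<phi> (x, t)"
  have slices: "case_prod ?g = (\<lambda>p. indicator chartR p *\<^sub>R \<phi> p)"
    unfolding chartR_def chart_slice_def by (auto simp: indicator_def)
  have prod: "integrable (lborel \<Otimes>\<^sub>M lborel) (case_prod ?g)"
    using int unfolding set_integrable_def lborel_prod slices .
  show "AE t in lborel. set_integrable lborel (chart_slice t) (\<lambda>x. \<phi> (x, t))"
    using lborel_pair.AE_integrable_snd[OF prod] unfolding set_integrable_def .
  show "integrable lborel (\<lambda>t. LINT x : chart_slice t | lborel. \<phi> (x, t))"
    using lborel_pair.integrable_snd[OF prod] unfolding set_lebesgue_integral_def .
  have "(LINT p : chartR | lborel. \<phi> p) = integral\<^sup>L (lborel \<Otimes>\<^sub>M lborel) (case_prod ?g)"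
    unfolding set_lebesgue_integral_def lborel_prod slices ..
  also have "\<dots> = (\<integral>t. (\<integral>x. ?g x t \<partial>lborel) \<partial>lborel)"
    by (rule lborel_pair.integral_snd[OF prod, symmetric])
  finally show "(LINT p : chartR | lborel. \<phi> p) = (\<integral>t. (LINT x : chart_slice t | lborel. \<phi> (x, t)) \<partial>lborel)"
    unfolding set_lebesgue_integral_def .
qed

lemma integral_X_by_slices:
  assumes "integrable_X H"
  shows "integrable lborel (slice_integral H)"
    and "integral_X H = (\<integral>t. slice_integral H t \<partial>lborel)"
proof -
  note slices = set_integral_chartR_by_slices[of "chart_density H e" for e]
  have int: "integrable lborel (\<lambda>t. LINT x : chart_slice t | lborel. chart_density H e (x, t))"
    if "e \<in> {1, -1}" for e
    using assms that slices(2) unfolding integrable_X_def by blast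
  then show "integrable lborel (slice_integral H)"
    unfolding slice_integral_def[abs_def] by (intro Bochner_Integration.integrable_sum int)
  have "integral_X H
      = (\<Sum>e\<in>{1, -1::real}. \<integral>t. (LINT x : chart_slice t | lborel. chart_density H e (x, t)) \<partial>lborel)"
    using assms slices(3) unfolding integral_X_def integrable_X_def by simp
  also have "\<dots> = (\<integral>t. slice_integral H t \<partial>lborel)"
    unfolding slice_integral_def by (rule Bochner_Integration.integral_sum[symmetric]) (rule int)
  finally show "integral_X H = (\<integral>t. slice_integral H t \<partial>lborel)" .
qed

lemma chart_slice_change_of_variables:
  fixes H :: "pt3 \<Rightarrow> complex"
  assumes e: "e \<in> {1, -1}" and t: "t\<^sup>2 \<noteq> 1"
    and int: "set_integrable lborel (chart_slice t) (\<lambda>x. chart_density H e (x, t))"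
  defines "F \<equiv> \<lambda>a. H (hyp_pt t a) / complex_of_real (2 * \<bar>a\<bar>)"
  shows "F absolutely_integrable_on chart_null_coord t e ` chart_slice t"
    and "integral (chart_null_coord t e ` chart_slice t) F
           = (LINT x : chart_slice t | lborel. chart_density H e (x, t))"
proof -
  let ?J = "\<lambda>x. 1 + e * x / sqrt (x\<^sup>2 + t\<^sup>2 - 1)"
  have jacobian: "\<bar>?J x\<bar> *\<^sub>R F (chart_null_coord t e x) = chart_density H e (x, t)"
    if x: "x \<in> chart_slice t" for x
  proof -
    define s where "s = sqrt (x\<^sup>2 + t\<^sup>2 - 1)"
    have "s > 0" using x unfolding s_def chart_slice_def by simp
    moreover note hyp_pt_chart_null_coord[OF e x t]
    ultimately show ?thesis
      unfolding abs_deriv_chart_null_coord[OF e x] F_def chart_density_def scaleR_conv_of_real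
      by (simp add: s_def[symmetric])
  qed
  have lebesgue: "chart_slice t \<in> sets lebesgue"
    unfolding chart_slice_def by (intro sets_completionI_sets) simp
  have "(\<lambda>x. \<bar>?J x\<bar> *\<^sub>R F (chart_null_coord t e x)) absolutely_integrable_on chart_slice t
        \<and> integral (chart_slice t) (\<lambda>x. \<bar>?J x\<bar> *\<^sub>R F (chart_null_coord t e x))
            = (LINT x : chart_slice t | lborel. chart_density H e (x, t))"
    using set_integrable_lborel_imp_absolutely_integrable[OF int]
      set_borel_integral_eq_integral(2)[OF int]
    by (simp add: jacobian cong: set_integrable_cong integral_cong)
  then show "F absolutely_integrable_on chart_null_coord t e ` chart_slice t"
    and "integral (chart_null_coord t e ` chart_slice t) F
           = (LINT x : chart_slice t | lborel. chart_density H e (x, t))"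
    by (simp_all add: has_absolute_integral_change_of_variables_real[OF lebesgue
          chart_null_coord_has_derivative inj_on_chart_null_coord[OF e t]])
qed

lemma slice_integral_eq_null_coord_integral:
  fixes H :: "pt3 \<Rightarrow> complex"
  assumes t: "t\<^sup>2 \<noteq> 1"
    and int: "\<And>e. e \<in> {1, -1} \<Longrightarrow> set_integrable lborel (chart_slice t) (\<lambda>x. chart_density H e (x, t))"
  defines "F \<equiv> \<lambda>a. H (hyp_pt t a) / complex_of_real (2 * \<bar>a\<bar>)"
  shows "F absolutely_integrable_on UNIV \<and> integral UNIV F = slice_integral H t"
proof -
  define A where "A e = chart_null_coord t e ` chart_slice t" for e
  have e: "(1::real) \<in> {1, -1}" "(-1::real) \<in> {1, -1}" by auto
  note cov1 = chart_slice_change_of_variables[OF e(1) t int[OF e(1)], folded F_def A_def]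
  note cov2 = chart_slice_change_of_variables[OF e(2) t int[OF e(2)], folded F_def A_def]
  have disjoint: "A 1 \<inter> A (-1) = {}"
  proof (rule equals0I)
    fix a assume "a \<in> A 1 \<inter> A (-1)"
    then obtain x y where x: "x \<in> chart_slice t" and y: "y \<in> chart_slice t"
      and "a = chart_null_coord t 1 x" "a = chart_null_coord t (-1) y"
      unfolding A_def by blast
    then have "sgn (fst (hyp_pt t a)) = 1" "sgn (fst (hyp_pt t a)) = -1"
      using sgn_fst_hyp_pt_chart_null_coord[OF e(1) x t] sgn_fst_hyp_pt_chart_null_coord[OF e(2) y t]
      by simp_all
    then show False by simp
  qed
  have exceptional: "negligible {a \<in> UNIV - (A 1 \<union> A (-1)). F a \<noteq> 0}"
  proof (rule negligible_subset)
    show "negligible {a. a = 0 \<or> fst (hyp_pt t a) = 0}"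
      by (rule negligible_finite[OF finite_hyp_pt_off_charts])
    have "a \<in> A 1 \<union> A (-1)" if "a \<noteq> 0" "fst (hyp_pt t a) \<noteq> 0" for a
      using chart_null_coord_surj[OF that] that(2) unfolding A_def
      by (cases "fst (hyp_pt t a) > 0") (auto simp: sgn_if)
    then show "{a \<in> UNIV - (A 1 \<union> A (-1)). F a \<noteq> 0} \<subseteq> {a. a = 0 \<or> fst (hyp_pt t a) = 0}"
      by blast
  qed
  have "F absolutely_integrable_on A 1 \<union> A (-1)"
    using cov1(1) cov2(1) by (rule absolutely_integrable_Un)
  then have abs_int: "F absolutely_integrable_on UNIV"
    using absolutely_integrable_spike_set_eq[OF exceptional] by simp
  have "(F has_integral integral (A 1) F + integral (A (-1)) F) (A 1 \<union> A (-1))"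
    using cov1(1) cov2(1) disjoint
    by (intro has_integral_Un integrable_integral set_lebesgue_integral_eq_integral(1)) auto
  then have "(F has_integral slice_integral H t) UNIV"
    using has_integral_spike_set_eq[OF exceptional] cov1(2) cov2(2)
    by (simp add: slice_integral_def)
  with abs_int show ?thesis by (simp add: integral_unique)
qed

lemma AE_slice_integral_eq_null_coord_integral:
  assumes "integrable_X H"
  defines "F \<equiv> \<lambda>t a. H (hyp_pt t a) / complex_of_real (2 * \<bar>a\<bar>)"
  shows "AE t in lborel. F t absolutely_integrable_on UNIV \<and> integral UNIV (F t) = slice_integral H t"
proof -
  have slices: "AE t in lborel. set_integrable lborel (chart_slice t) (\<lambda>x. chart_density H e (x, t))"
    if "e \<in> {1, -1}" for e
    using assms(1) that set_integral_chartR_by_slices(1) unfolding integrable_X_def by blast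
  have "(1::real) \<in> {1, -1}" "(-1::real) \<in> {1, -1}" by auto
  from this[THEN slices] show ?thesis
    using AE_lborel_singleton[of "1::real"] AE_lborel_singleton[of "-1::real"]
  proof eventually_elim
    case (elim t)
    then have "t\<^sup>2 \<noteq> 1" by (simp add: power2_eq_1_iff)
    with elim show ?case
      unfolding F_def by (intro slice_integral_eq_null_coord_integral) auto
  qed
qed

lemma integral_X_dilation:
  assumes H: "integrable_X H" and K: "integrable_X K" and l: "l > 0"
    and HK: "\<And>t a. a \<noteq> 0 \<Longrightarrow> H (hyp_pt t a) = C * K (hyp_pt t (l * a))"
  shows "integral_X H = C * integral_X K"
proof -
  let ?F = "\<lambda>H t a. H (hyp_pt t a) / complex_of_real (2 * \<bar>a\<bar>)"
  \<comment> \<open>At a = 0 both sides vanish because division by zero yields zero.\<close>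
  have pointwise: "?F H t = (\<lambda>a. C * (l *\<^sub>R ?F K t (l * a)))" for t
  proof
    fix a show "?F H t a = C * (l *\<^sub>R ?F K t (l * a))"
      using HK[of a t] l by (cases "a = 0") (simp_all add: scaleR_conv_of_real abs_mult)
  qed
  have "AE t in lborel. slice_integral H t = C * slice_integral K t"
    using AE_slice_integral_eq_null_coord_integral[OF H] AE_slice_integral_eq_null_coord_integral[OF K]
  proof eventually_elim
    case (elim t)
    have "slice_integral H t = integral UNIV (\<lambda>a. C * (l *\<^sub>R ?F K t (l * a)))"
      using elim(1) unfolding pointwise by simp
    also have "\<dots> = C * integral UNIV (\<lambda>a. l *\<^sub>R ?F K t (l * a))"
      by (rule Henstock_Kurzweil_Integration.integral_mult_right)
    also have "\<dots> = C * integral UNIV (?F K t)"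
      using integral_dilation[OF conjunct1[OF elim(2)] l] by (rule arg_cong)
    also have "\<dots> = C * slice_integral K t"
      using elim(2) by simp
    finally show ?case .
  qed
  then have "(\<integral>t. slice_integral H t \<partial>lborel) = (\<integral>t. C * slice_integral K t \<partial>lborel)"
    using integral_X_by_slices(1)[OF H] integral_X_by_slices(1)[OF K]
    by (intro integral_cong_AE) auto
  then show ?thesis
    by (simp add: integral_X_by_slices(2)[OF H] integral_X_by_slices(2)[OF K])
qed

definition boost :: "real \<Rightarrow> pt3 \<Rightarrow> pt3" where
  "boost l x = (((l + 1/l)/2) * fst x + ((l - 1/l)/2) * fst (snd x),
                ((l - 1/l)/2) * fst x + ((l + 1/l)/2) * fst (snd x), snd (snd x))"

lemma lbr_boost:
  assumes "l > 0"
  shows "lbr (boost l x) (boost l y) = lbr x y"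
  using assms by (cases x, cases y) (simp add: boost_def lbr_def field_simps)

lemma boost_in_stabG:
  assumes l: "l > 0"
  shows "boost l \<in> stabG bpt"
proof -
  have "linear (boost l)" by (rule linearI) (auto simp: boost_def field_simps)
  moreover have "det3 (boost l) = 1" and "fst (boost l (1, 0, 0)) > 0"
    using l by (simp_all add: det3_def boost_def field_simps add_pos_pos)
  moreover have "boost l bpt = bpt" by (simp add: boost_def bpt_def)
  ultimately show ?thesis
    unfolding stabG_def SO012_def using lbr_boost[OF l] by auto
qed

lemma boost_hyp_pt:
  assumes "l > 0" and "a \<noteq> 0"
  shows "boost l (hyp_pt t a) = hyp_pt t (l * a)"
  using assms by (simp add: boost_def hyp_pt_def field_simps)

lemma coneC_boost_normal_form:
  assumes \<xi>: "\<xi> \<in> coneC" and nz: "snd (snd \<xi>) \<noteq> 0"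
  obtains l where "l > 0" and "boost l \<xi> = \<bar>snd (snd \<xi>)\<bar> *\<^sub>R (1, 0, sgn (snd (snd \<xi>)))"
proof -
  obtain p0 p1 p2 where \<xi>_eq: "\<xi> = (p0, p1, p2)" by (cases \<xi>)
  define q where "q = \<bar>p2\<bar>"
  have q: "q > 0" using nz \<xi>_eq unfolding q_def by simp
  have p0: "p0 > 0" and "p0 * p0 = p1 * p1 + q * q"
    using \<xi> \<xi>_eq unfolding coneC_def lbr_def q_def by (auto simp: abs_mult_self_eq)
  have "q * q > 0" using q by simp
  have null: "q * q = (p0 + p1) * (p0 - p1)" using \<open>p0 * p0 = p1 * p1 + q * q\<close> by algebra
  have "\<bar>p1\<bar>\<^sup>2 < p0\<^sup>2"
    using \<open>p0 * p0 = p1 * p1 + q * q\<close> \<open>q * q > 0\<close> unfolding power2_abs by (simp add: power2_eq_square)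
  then have "\<bar>p1\<bar> < p0" using p0 by (rule power2_less_imp_less[OF _ less_imp_le])
  then have minus: "p0 - p1 > 0" by auto
  define l where "l = (p0 - p1) / q"
  have l: "l > 0" unfolding l_def using minus q by simp
  have inv_l: "1 / l = (p0 + p1) / q"
    using null minus q unfolding l_def by (simp add: field_simps)
  have "((l + 1/l)/2) * p0 + ((l - 1/l)/2) * p1 = ((p0 + p1) * (p0 - p1)) / q"
    using q unfolding inv_l unfolding l_def by (simp add: field_simps)
  moreover have "((l - 1/l)/2) * p0 + ((l + 1/l)/2) * p1 = 0"
    using q unfolding inv_l unfolding l_def by (simp add: field_simps)
  ultimately have "boost l \<xi> = (q, 0, p2)"
    unfolding boost_def \<xi>_eq using q by (simp flip: null)
  also have "\<dots> = q *\<^sub>R (1, 0, sgn p2)" unfolding q_def by (simp add: abs_mult_sgn)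
  finally show ?thesis
    using l by (intro that) (simp_all add: \<xi>_eq q_def)
qed

definition FH_density :: "real \<Rightarrow> (pt3 \<Rightarrow> complex) \<Rightarrow> real \<Rightarrow> pt3 \<Rightarrow> pt3 \<Rightarrow> complex" where
  "FH_density sg f \<nu> \<xi> x = powpm sg (lbr x \<xi>) (- 1/2 - \<i> * complex_of_real \<nu>) * f x"

lemma FH_integrand_eq_chart_density: "FH_integrand sg f \<nu> \<xi> = chart_density (FH_density sg f \<nu> \<xi>)"
  by (intro ext) (simp add: FH_integrand_def chart_density_def FH_density_def)

lemma FH_defined_iff_integrable_X: "FH_defined sg f \<nu> \<xi> \<longleftrightarrow> integrable_X (FH_density sg f \<nu> \<xi>)"
  unfolding FH_defined_def integrable_X_def FH_integrand_eq_chart_density ..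

lemma FH_eq_integral_X: "FH sg f \<nu> \<xi> = integral_X (FH_density sg f \<nu> \<xi>)"
  unfolding FH_def integral_X_def FH_integrand_eq_chart_density ..

lemma powpm_mult_pos:
  assumes a: "a > 0"
  shows "powpm sg (a * u) z = complex_of_real a powr z * powpm sg u z"
proof -
  have abs: "\<bar>a * u\<bar> = a * \<bar>u\<bar>" using a by (simp add: abs_mult)
  have powr: "complex_of_real (a * \<bar>u\<bar>) powr z = complex_of_real a powr z * complex_of_real \<bar>u\<bar> powr z"
    using a by (subst of_real_mult) (rule powr_times_real, auto)
  have sign: "a * u \<ge> 0 \<longleftrightarrow> u \<ge> 0" using a by (simp add: zero_le_mult_iff)
  show ?thesis unfolding powpm_def abs powr sign by (simp add: mult_ac)
qed

lemma FH_density_scaleR: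
  assumes "q > 0"
  shows "FH_density sg f \<nu> (q *\<^sub>R \<zeta>) x
    = complex_of_real q powr (- 1/2 - \<i> * complex_of_real \<nu>) * FH_density sg f \<nu> \<zeta> x"
proof -
  have "lbr x (q *\<^sub>R \<zeta>) = q * lbr x \<zeta>"
    by (cases x, cases \<zeta>) (simp add: lbr_def algebra_simps)
  then show ?thesis
    unfolding FH_density_def by (simp add: powpm_mult_pos[OF assms] mult_ac)
qed

lemma FH_density_invariant:
  assumes "\<And>x y. lbr (g x) (g y) = lbr x y" and "f (g x) = f x"
  shows "FH_density sg f \<nu> (g \<xi>) (g x) = FH_density sg f \<nu> \<xi> x"
  using assms by (simp add: FH_density_def)

lemma FH_eq_FH_normal_form:
  assumes inv: "\<forall>g\<in>stabG bpt. \<forall>x\<in>hypX. f (g x) = f x"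
    and defd: "\<forall>\<xi>\<in>coneC. FH_defined sg f \<nu> \<xi>"
    and \<xi>: "\<xi> \<in> coneC" and nz: "snd (snd \<xi>) \<noteq> 0"
  shows "FH sg f \<nu> \<xi> = complex_of_real \<bar>snd (snd \<xi>)\<bar> powr (- 1/2 - \<i> * complex_of_real \<nu>)
      * FH sg f \<nu> (1, 0, sgn (snd (snd \<xi>)))"
proof -
  define q \<zeta> where "q = \<bar>snd (snd \<xi>)\<bar>" and "\<zeta> = (1::real, 0::real, sgn (snd (snd \<xi>)))"
  obtain l where l: "l > 0" and boost_\<xi>: "boost l \<xi> = q *\<^sub>R \<zeta>"
    using coneC_boost_normal_form[OF \<xi> nz] unfolding q_def \<zeta>_def .
  have q: "q > 0" using nz unfolding q_def by simp
  have "\<zeta> \<in> coneC" using nz unfolding \<zeta>_def coneC_def lbr_def by (auto simp: sgn_if zero_prod_def)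
  then have integrable: "integrable_X (FH_density sg f \<nu> \<zeta>)" "integrable_X (FH_density sg f \<nu> \<xi>)"
    using defd \<xi> by (simp_all add: FH_defined_iff_integrable_X)
  have "FH_density sg f \<nu> \<xi> (hyp_pt t a)
      = complex_of_real q powr (- 1/2 - \<i> * complex_of_real \<nu>) * FH_density sg f \<nu> \<zeta> (hyp_pt t (l * a))"
    if a: "a \<noteq> 0" for t a
  proof -
    have "f (boost l (hyp_pt t a)) = f (hyp_pt t a)"
      using inv boost_in_stabG[OF l] hyp_pt_in_hypX[OF a] by blast
    then have "FH_density sg f \<nu> \<xi> (hyp_pt t a) = FH_density sg f \<nu> (boost l \<xi>) (boost l (hyp_pt t a))"
      using lbr_boost[OF l] by (simp add: FH_density_invariant)
    then show ?thesis
      unfolding boost_\<xi> boost_hyp_pt[OF l a] FH_density_scaleR[OF q] .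
  qed
  then show ?thesis
    unfolding FH_eq_integral_X q_def[symmetric] \<zeta>_def[symmetric]
    by (rule integral_X_dilation[OF integrable(2,1) l])
qed

theorem proposition14:
  fixes f :: "pt3 \<Rightarrow> complex" and sg \<nu> :: real
  assumes sg: "sg \<in> {1, -1}"
    and inv: "\<forall>g\<in>stabG bpt. \<forall>x\<in>hypX. f (g x) = f x"
    and defd: "\<forall>\<xi>\<in>coneC. FH_defined sg f \<nu> \<xi>"
  shows "\<forall>\<xi>\<in>coneC. lbr \<xi> bpt \<noteq> 0 \<longrightarrow>
    FH sg f \<nu> \<xi> =
      complex_of_real \<bar>lbr \<xi> bpt\<bar> powr (- 1/2 - \<i> * complex_of_real \<nu>) *
      (complex_of_real (heav (lbr \<xi> bpt)) * FH sg f \<nu> (1, 0, -1)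
       + complex_of_real (heav (- lbr \<xi> bpt)) * FH sg f \<nu> (1, 0, 1))"
proof -
  have lbr_bpt: "lbr \<xi> bpt = - snd (snd \<xi>)" for \<xi>
    by (cases \<xi>) (simp add: lbr_def bpt_def)
  show ?thesis
    using FH_eq_FH_normal_form[OF inv defd] unfolding lbr_bpt heav_def
    by (auto simp: sgn_if)
qed

end
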